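(* Let $\Psi=\langle\mathcal{S},\mathcal{P},\mathcal{T}\rangle$ be an SPL with internally consistent (e.g. canonical) traceability relation, and let $F\in\mathcal{S}$ with $Prop(F)=(f'_1,\dots,f'_m)$. Then $F$ is existentially explicit if and only if the quantified Boolean formula $\exists c'_1\cdots c'_n\,[\,C_I(c'_1,\dots,c'_n)\wedge f\_realizes(c'_1,\dots,c'_n,f'_1,\dots,f'_m)\,]$ is true.
   Context: $\mathcal{F}=\{f_1,\dots,f_m\}$ features, $\mathcal{C}=\{c_1,\dots,c_n\}$ components, scope $\mathcal{S}\subseteq\mathcal{P}ow(\mathcal{F})$, platform $\mathcal{P}\subseteq\mathcal{P}ow(\mathcal{C})$, $\mathcal{T}=\langle prov,req\rangle$ with $prov,req:\mathcal{F}\to\mathcal{P}ow(\mathcal{P}ow(\mathcal{C}))$. $implements(C,f)$ iff $\exists C_1\in prov(f),C_2\in req(f)$ with $C_2\subseteq C_1\subseteq C$; $Provided\_by(C)=\{f:implements(C,f)\}$; $\mathrm{Realizes}(C,F)$ iff $F=Provided\_by(C)$. $F\in\mathcal{S}$ is existentially explicit if some $C\in\mathcal{P}$ satisfies $\mathrm{Realizes}(C,F)$. Internally consistent: for every $f$ and $C\in prov(f)$ there is $C'\in req(f)$ with $C'\subseteq C$. $Prop(F)\in\{0,1\}^m$ with $f'_j=1$ iff $f_j\in F$. With Boolean variables $c_1,\dots,c_n$: $formula\_prov(f)=\bigvee_{S\in prov(f)}\bigwedge_{c_i\in S}c_i$ (FALSE if $prov(f)=\emptyset$); $f\_implements(c'_1,\dots,c'_n,f)=\forall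 c_1\cdots c_n\{[\bigwedge_i(c'_i\Rightarrow c_i)]\Rightarrow formula\_prov(f)\}$; $f\_realizes(c',f')=\bigwedge_{j=1}^m(f'_j\Leftrightarrow f\_implements(c',f_j))$. $C_I(c'_1,\dots,c'_n)=\bigvee_{A\in\mathcal{P}}\bigwedge_{i=1}^n \ell^A_i$, where $\ell^A_i=c'_i$ if $c_i\in A$ and $\ell^A_i=\neg c'_i$ otherwise; thus $C_I(c')$ holds iff $c'=Prop(A)$ for some $A\in\mathcal{P}$. *)

theory Defs
  imports Main
begin

(* Features are elements of a finite type 'f (f_1..f_m), components of a finite type 'c (c_1..c_n).
   A traceability relation T = <prov, req> is a pair of maps prov, req :: 'f => 'c set set. *)

definition implements :: "('f \<Rightarrow> 'c set set) \<Rightarrow> ('f \<Rightarrow> 'c set set) \<Rightarrow> 'c set \<Rightarrow> 'f \<Rightarrow> bool" where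
  "implements prov req C f \<longleftrightarrow> (\<exists>C1\<in>prov f. \<exists>C2\<in>req f. C2 \<subseteq> C1 \<and> C1 \<subseteq> C)"

definition Provided_by :: "('f \<Rightarrow> 'c set set) \<Rightarrow> ('f \<Rightarrow> 'c set set) \<Rightarrow> 'c set \<Rightarrow> 'f set" where
  "Provided_by prov req C = {f. implements prov req C f}"

definition Realizes :: "('f \<Rightarrow> 'c set set) \<Rightarrow> ('f \<Rightarrow> 'c set set) \<Rightarrow> 'c set \<Rightarrow> 'f set \<Rightarrow> bool" where
  "Realizes prov req C F \<longleftrightarrow> F = Provided_by prov req C"

definition existentially_explicit ::
  "'c set set \<Rightarrow> ('f \<Rightarrow> 'c set set) \<Rightarrow> ('f \<Rightarrow> 'c set set) \<Rightarrow> 'f set \<Rightarrow> bool" where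
  "existentially_explicit P prov req F \<longleftrightarrow> (\<exists>C\<in>P. Realizes prov req C F)"

definition internally_consistent :: "('f \<Rightarrow> 'c set set) \<Rightarrow> ('f \<Rightarrow> 'c set set) \<Rightarrow> bool" where
  "internally_consistent prov req \<longleftrightarrow> (\<forall>f. \<forall>C\<in>prov f. \<exists>C'\<in>req f. C' \<subseteq> C)"

(* Prop(F) in {0,1}^m, represented as a Boolean assignment to the features *)
definition Prop :: "'f set \<Rightarrow> ('f \<Rightarrow> bool)" where
  "Prop F = (\<lambda>f. f \<in> F)"

(* Boolean formulas are represented semantically as predicates on assignments 'c => bool *)
definition formula_prov :: "('f \<Rightarrow> 'c set set) \<Rightarrow> 'f \<Rightarrow> ('c \<Rightarrow> bool) \<Rightarrow> bool" where
  "formula_prov prov f c \<longleftrightarrow> (\<exists>S\<in>prov f. \<forall>ci\<in>S. c ci)"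

definition f_implements :: "('f \<Rightarrow> 'c set set) \<Rightarrow> ('c \<Rightarrow> bool) \<Rightarrow> 'f \<Rightarrow> bool" where
  "f_implements prov c' f \<longleftrightarrow> (\<forall>c. (\<forall>i. c' i \<longrightarrow> c i) \<longrightarrow> formula_prov prov f c)"

definition f_realizes :: "('f \<Rightarrow> 'c set set) \<Rightarrow> ('c \<Rightarrow> bool) \<Rightarrow> ('f \<Rightarrow> bool) \<Rightarrow> bool" where
  "f_realizes prov c' f' \<longleftrightarrow> (\<forall>j. f' j \<longleftrightarrow> f_implements prov c' j)"

definition C_I :: "'c set set \<Rightarrow> ('c \<Rightarrow> bool) \<Rightarrow> bool" where
  "C_I P c' \<longleftrightarrow> (\<exists>A\<in>P. \<forall>i. (if i \<in> A then c' i else \<not> c' i))"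

end

theory Submission
  imports Defs
begin

(* A Boolean assignment c' to the components is the characteristic
   function of the component set {i. c' i}, and C_I P c' says precisely that this
   set belongs to the platform P.  The universally quantified formula
   f_implements prov c' f asks formula_prov to hold on every assignment above c';
   since formula_prov is a monotone DNF, this is equivalent to formula_prov holding
   on c' itself, i.e. to some provision set of f lying inside the component set.
   Internal consistency supplies the required set below each provision set, so this
   is exactly implements prov req C f.  Consequently f_realizes on the
   characteristic assignment of C is Realizes C F, and the QBF is a reformulation
   of existential explicitness. *)

text \<open>Semantic form of f_implements: its universal quantifier over larger
  assignments collapses, because the DNF formula_prov is monotone.\<close>
lemma f_implements_iff_subset:
  "f_implements prov c' f \<longleftrightarrow> (\<exists>S\<in>prov f. S \<subseteq> {i. c' i})"
proof
  assume "f_implements prov c' f"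
  then have "formula_prov prov f c'"
    unfolding f_implements_def by blast
  then show "\<exists>S\<in>prov f. S \<subseteq> {i. c' i}"
    unfolding formula_prov_def by blast
next
  assume "\<exists>S\<in>prov f. S \<subseteq> {i. c' i}"
  then show "f_implements prov c' f"
    unfolding f_implements_def formula_prov_def by blast
qed

lemma implements_iff_prov_subset:
  assumes "internally_consistent prov req"
  shows "implements prov req C f \<longleftrightarrow> (\<exists>S\<in>prov f. S \<subseteq> C)"
proof
  assume "implements prov req C f"
  then show "\<exists>S\<in>prov f. S \<subseteq> C"
    unfolding implements_def by blast
next
  assume "\<exists>S\<in>prov f. S \<subseteq> C"
  then obtain S where S: "S \<in> prov f" "S \<subseteq> C" by blast
  with assms obtain S' where "S' \<in> req f" "S' \<subseteq> S"
    unfolding internally_consistent_def by blast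
  with S show "implements prov req C f"
    unfolding implements_def by blast
qed

lemma f_implements_Prop_iff_implements:
  assumes "internally_consistent prov req"
  shows "f_implements prov (Prop C) f \<longleftrightarrow> implements prov req C f"
  by (simp add: f_implements_iff_subset implements_iff_prov_subset[OF assms] Prop_def)

lemma f_realizes_Prop_iff_Realizes:
  assumes "internally_consistent prov req"
  shows "f_realizes prov (Prop C) (Prop F) \<longleftrightarrow> Realizes prov req C F"
  unfolding f_realizes_def Realizes_def Provided_by_def
  by (simp add: f_implements_Prop_iff_implements[OF assms]) (auto simp: Prop_def)

lemma C_I_iff_Prop:
  "C_I P c' \<longleftrightarrow> (\<exists>A\<in>P. c' = Prop A)"
proof -
  have "(\<forall>i. if i \<in> A then c' i else \<not> c' i) \<longleftrightarrow> c' = Prop A" for A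
  proof -
    have "(if i \<in> A then c' i else \<not> c' i) \<longleftrightarrow> c' i = (i \<in> A)" for i
      by simp
    then show ?thesis
      unfolding Prop_def fun_eq_iff by simp
  qed
  then show ?thesis
    unfolding C_I_def by simp
qed

theorem mainTheorem8:
  fixes S :: "('f::finite) set set" and P :: "('c::finite) set set"
    and prov req :: "'f \<Rightarrow> 'c set set" and F :: "'f set"
  assumes "internally_consistent prov req"
    and "F \<in> S"
  shows "existentially_explicit P prov req F \<longleftrightarrow>
         (\<exists>c'. C_I P c' \<and> f_realizes prov c' (Prop F))"
proof -
  have "(\<exists>c'. C_I P c' \<and> f_realizes prov c' (Prop F))
      \<longleftrightarrow> (\<exists>A\<in>P. f_realizes prov (Prop A) (Prop F))"
    by (auto simp: C_I_iff_Prop)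
  also have "\<dots> \<longleftrightarrow> (\<exists>A\<in>P. Realizes prov req A F)"
    by (simp add: f_realizes_Prop_iff_Realizes[OF assms(1)])
  finally show ?thesis
    unfolding existentially_explicit_def by simp
qed

end
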